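(* Let $(G,u,v,\alpha,\beta)$ be a Guvab with $\lim_{k\to\infty}W_k=\frac12$ and $\beta<1$. Then there exists $N$ such that for all $k\ge N$, $$\left|W_k-\tfrac12\right|=0.5\,|1-2\beta|^k.$$
   Context: A Guvab is a tuple $(G,u,v,\alpha,\beta)$ where $G$ is a finite, connected, simple graph, $u,v\in V(G)$, and $\alpha,\beta\in[0,1]$ with $\alpha\le\beta$. A random walk on $G$ with starting vertex $w$ and laziness $\gamma$ is the Markov chain $R_0=w$ and, for $i\ge1$, $R_i=R_{i-1}$ with probability $\gamma$ and $R_i=t$ with probability $\frac{1-\gamma}{\deg(R_{i-1})}$ for each neighbor $t$ of $R_{i-1}$. $\mu_k$ is the distribution after $k$ steps of the walk from $u$ with laziness $\alpha$, $\nu_k$ that of the walk from $v$ with laziness $\beta$, and $W_k=W(\mu_k,\nu_k)$ is the Wasserstein ($L^1$ optimal transport) distance with respect to the graph distance: the minimum over transportation plans (nonnegative $T$ on $V(G)\times V(G)$ with marginals $\mu_k,\nu_k$) of $\sum d(w_1,w_2)T(w_1,w_2)$. *)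

theory Defs
  imports "HOL-Analysis.Analysis"
begin

definition edge_rel :: "'a set \<Rightarrow> ('a \<Rightarrow> 'a \<Rightarrow> bool) \<Rightarrow> ('a \<times> 'a) set" where
  "edge_rel V E = {(x, y). x \<in> V \<and> y \<in> V \<and> E x y}"

definition simple_graph :: "'a set \<Rightarrow> ('a \<Rightarrow> 'a \<Rightarrow> bool) \<Rightarrow> bool" where
  "simple_graph V E \<longleftrightarrow> finite V \<and> V \<noteq> {} \<and>
     (\<forall>x y. E x y \<longrightarrow> x \<in> V \<and> y \<in> V) \<and>
     (\<forall>x y. E x y \<longrightarrow> E y x) \<and> (\<forall>x. \<not> E x x)"

definition connected_graph :: "'a set \<Rightarrow> ('a \<Rightarrow> 'a \<Rightarrow> bool) \<Rightarrow> bool" where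
  "connected_graph V E \<longleftrightarrow> simple_graph V E \<and>
     (\<forall>x\<in>V. \<forall>y\<in>V. (x, y) \<in> (edge_rel V E)\<^sup>*)"

definition deg :: "'a set \<Rightarrow> ('a \<Rightarrow> 'a \<Rightarrow> bool) \<Rightarrow> 'a \<Rightarrow> nat" where
  "deg V E x = card {y \<in> V. E x y}"

definition gdist :: "'a set \<Rightarrow> ('a \<Rightarrow> 'a \<Rightarrow> bool) \<Rightarrow> 'a \<Rightarrow> 'a \<Rightarrow> nat" where
  "gdist V E x y = (LEAST n. (x, y) \<in> (edge_rel V E) ^^ n)"

(* Transition probability of the lazy random walk with laziness g.
   (Convention for an isolated vertex, which only occurs in the one-vertex graph:
    the walk stays put.) *)
definition trans_prob :: "'a set \<Rightarrow> ('a \<Rightarrow> 'a \<Rightarrow> bool) \<Rightarrow> real \<Rightarrow> 'a \<Rightarrow> 'a \<Rightarrow> real" where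
  "trans_prob V E g s t =
     (if deg V E s = 0 then (if s = t then 1 else 0)
      else if s = t then g
      else if E s t then (1 - g) / real (deg V E s) else 0)"

primrec walk_dist :: "'a set \<Rightarrow> ('a \<Rightarrow> 'a \<Rightarrow> bool) \<Rightarrow> real \<Rightarrow> 'a \<Rightarrow> nat \<Rightarrow> 'a \<Rightarrow> real" where
  "walk_dist V E g w 0 = (\<lambda>t. if t = w then 1 else 0)"
| "walk_dist V E g w (Suc k) =
     (\<lambda>t. \<Sum>s\<in>V. walk_dist V E g w k s * trans_prob V E g s t)"

definition transport_plan ::
  "'a set \<Rightarrow> ('a \<Rightarrow> real) \<Rightarrow> ('a \<Rightarrow> real) \<Rightarrow> ('a \<Rightarrow> 'a \<Rightarrow> real) \<Rightarrow> bool" where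
  "transport_plan V \<mu> \<nu> T \<longleftrightarrow>
     (\<forall>x\<in>V. \<forall>y\<in>V. T x y \<ge> 0) \<and>
     (\<forall>x\<in>V. (\<Sum>y\<in>V. T x y) = \<mu> x) \<and>
     (\<forall>y\<in>V. (\<Sum>x\<in>V. T x y) = \<nu> y)"

definition wasserstein ::
  "'a set \<Rightarrow> ('a \<Rightarrow> 'a \<Rightarrow> bool) \<Rightarrow> ('a \<Rightarrow> real) \<Rightarrow> ('a \<Rightarrow> real) \<Rightarrow> real" where
  "wasserstein V E \<mu> \<nu> =
     Inf ((\<lambda>T. \<Sum>x\<in>V. \<Sum>y\<in>V. real (gdist V E x y) * T x y) ` {T. transport_plan V \<mu> \<nu> T})"

definition guvab :: "'a set \<Rightarrow> ('a \<Rightarrow> 'a \<Rightarrow> bool) \<Rightarrow> 'a \<Rightarrow> 'a \<Rightarrow> real \<Rightarrow> real \<Rightarrow> bool" where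
  "guvab V E u v \<alpha> \<beta> \<longleftrightarrow> connected_graph V E \<and> u \<in> V \<and> v \<in> V \<and>
     0 \<le> \<alpha> \<and> \<alpha> \<le> \<beta> \<and> \<beta> \<le> 1"

definition Wk :: "'a set \<Rightarrow> ('a \<Rightarrow> 'a \<Rightarrow> bool) \<Rightarrow> 'a \<Rightarrow> 'a \<Rightarrow> real \<Rightarrow> real \<Rightarrow> nat \<Rightarrow> real" where
  "Wk V E u v \<alpha> \<beta> k = wasserstein V E (walk_dist V E \<alpha> u k) (walk_dist V E \<beta> v k)"

end

theory Submission
  imports Defs
begin

(* If the walk from u is lazy, or the graph is not bipartite, both walks converge to the
   stationary distribution pi(x) = deg x / vol, and then W_k tends to 0; the same happens for two
   non-lazy walks started in the same colour class of a bipartite graph, while for opposite classes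
   W_k >= 1. So the limit 1/2 forces G to be bipartite and alpha = 0 < beta.
   In that case mu_k lives on one colour class A_k, where it is close to 2 pi, while nu_k is close
   to pi. Near pi the surplus of mu_k over nu_k on A_k can be moved onto nu_k on the other class along
   single edges (a small perturbation of the uniform flow on the edges leaving A_k), so eventually
   W_k = nu_k(V - A_k), the trivial lower bound. Each lazy step keeps the colour with probability
   beta, hence nu_k(V - A_k) - 1/2 = +-(1/2) (2 beta - 1)^k. *)

lemma tendsto_0_if_contracting:
  fixes e :: "nat \<Rightarrow> real"
  assumes "\<And>k. e k \<ge> 0" and "\<And>k. e (Suc k) \<le> e k"
    and contract: "\<And>k. e (k + L) \<le> \<rho> * e k" and "\<rho> < 1"
  shows "e \<longlonglongrightarrow> 0"
proof -
  obtain l where l: "e \<longlonglongrightarrow> l" "\<forall>i. l \<le> e i"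
    using decseq_convergent[of e 0] assms(1,2) by (metis decseq_Suc_iff)
  have "l \<ge> 0" using l(1) assms(1) by (meson LIMSEQ_le_const)
  have "(\<lambda>k. e (k + L)) \<longlonglongrightarrow> l" using LIMSEQ_ignore_initial_segment[OF l(1)] .
  moreover have "(\<lambda>k. \<rho> * e k) \<longlonglongrightarrow> \<rho> * l" using l(1) by (intro tendsto_mult) auto
  ultimately have "l \<le> \<rho> * l" using contract by (intro LIMSEQ_le) auto
  then have "l = 0" using \<open>l \<ge> 0\<close> \<open>\<rho> < 1\<close> by (metis mult_le_cancel_right1 not_le order.antisym)
  then show ?thesis using l by simp
qed

section \<open>Connected simple graphs\<close>

locale connected_simple_graph =
  fixes V :: "'a set" and E :: "'a \<Rightarrow> 'a \<Rightarrow> bool"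
  assumes connected: "connected_graph V E"
begin

abbreviation adj :: "('a \<times> 'a) set" where "adj \<equiv> edge_rel V E"

lemma finite_V: "finite V"
  and V_nonempty: "V \<noteq> {}"
  and adj_in_V: "E x y \<Longrightarrow> x \<in> V \<and> y \<in> V"
  and adj_sym: "E x y \<Longrightarrow> E y x"
  and adj_irrefl: "\<not> E x x"
  using connected unfolding connected_graph_def simple_graph_def by auto

lemma adj_iff: "(x, y) \<in> adj \<longleftrightarrow> E x y"
  using adj_in_V unfolding edge_rel_def by auto

lemma adj_subset: "adj \<subseteq> V \<times> V"
  by (auto simp: edge_rel_def)

lemma walk_exists: "x \<in> V \<Longrightarrow> y \<in> V \<Longrightarrow> \<exists>n. (x, y) \<in> adj ^^ n"
  using connected unfolding connected_graph_def by (auto simp: rtrancl_power)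

lemma walk_sym: "(x, y) \<in> adj ^^ n \<Longrightarrow> (y, x) \<in> adj ^^ n"
proof (induction n arbitrary: y)
  case (Suc n)
  then obtain z where "(x, z) \<in> adj ^^ n" "E z y" by (auto elim: relpow_Suc_E simp: adj_iff)
  then show ?case using Suc.IH by (metis adj_iff adj_sym relpow_Suc_I2)
qed simp

lemma gdist_walk: "x \<in> V \<Longrightarrow> y \<in> V \<Longrightarrow> (x, y) \<in> adj ^^ gdist V E x y"
  unfolding gdist_def using walk_exists by (metis LeastI_ex)

lemma gdist_self [simp]: "gdist V E x x = 0"
  unfolding gdist_def by (metis (mono_tags) Least_eq_0 relpow_0_I)

lemma gdist_ge_1: "x \<in> V \<Longrightarrow> y \<in> V \<Longrightarrow> x \<noteq> y \<Longrightarrow> gdist V E x y \<ge> 1"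
  using gdist_walk[of x y] by (cases "gdist V E x y") auto

lemma gdist_adj: "E x y \<Longrightarrow> gdist V E x y = 1"
proof -
  assume xy: "E x y"
  then have "(x, y) \<in> adj ^^ 1" by (simp add: adj_iff)
  then have "gdist V E x y \<le> 1" unfolding gdist_def by (rule Least_le)
  with xy show ?thesis using gdist_ge_1 adj_in_V adj_irrefl by (metis le_antisym)
qed

definition diam :: nat where
  "diam = Max ((\<lambda>(x, y). gdist V E x y) ` (V \<times> V))"

lemma gdist_le_diam: "x \<in> V \<Longrightarrow> y \<in> V \<Longrightarrow> gdist V E x y \<le> diam"
  unfolding diam_def by (rule Max_ge) (auto simp: finite_V)

lemma deg_eq_sum: "real (deg V E x) = (\<Sum>y\<in>V. if E x y then 1 else 0)"
proof -
  have "{y\<in>V. E x y} = V \<inter> Collect (E x)" by auto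
  then show ?thesis unfolding deg_def by (simp add: sum.If_cases finite_V)
qed

lemma deg_eq_sum': "real (deg V E y) = (\<Sum>x\<in>V. if E x y then 1 else 0)"
  unfolding deg_eq_sum by (rule sum.cong) (auto dest: adj_sym)

lemma deg_le_card: "deg V E x \<le> card V"
  unfolding deg_def by (rule card_mono[OF finite_V]) auto

section \<open>Transport plans\<close>

abbreviation cost :: "('a \<Rightarrow> 'a \<Rightarrow> real) \<Rightarrow> real" where
  "cost T \<equiv> \<Sum>x\<in>V. \<Sum>y\<in>V. real (gdist V E x y) * T x y"

lemma wasserstein_le_cost: "transport_plan V \<mu> \<nu> T \<Longrightarrow> wasserstein V E \<mu> \<nu> \<le> cost T"
  unfolding wasserstein_def
  by (rule cInf_lower) (auto intro!: bdd_belowI[of _ 0] sum_nonneg simp: transport_plan_def)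

lemma product_transport_plan:
  assumes "\<And>x. x \<in> V \<Longrightarrow> \<mu> x \<ge> 0" "\<And>x. x \<in> V \<Longrightarrow> \<nu> x \<ge> 0"
    and "(\<Sum>x\<in>V. \<mu> x) = 1" "(\<Sum>x\<in>V. \<nu> x) = 1"
  shows "transport_plan V \<mu> \<nu> (\<lambda>x y. \<mu> x * \<nu> y)"
  unfolding transport_plan_def using assms
  by (auto simp: sum_distrib_left[symmetric] sum_distrib_right[symmetric])

text \<open>The easy direction of Kantorovich duality, for the 1-Lipschitz indicator function of B.\<close>

lemma wasserstein_ge_mass_diff:
  assumes "\<And>x. x \<in> V \<Longrightarrow> \<mu> x \<ge> 0" "\<And>x. x \<in> V \<Longrightarrow> \<nu> x \<ge> 0"
    and "(\<Sum>x\<in>V. \<mu> x) = 1" "(\<Sum>x\<in>V. \<nu> x) = 1" and B: "B \<subseteq> V"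
  shows "wasserstein V E \<mu> \<nu> \<ge> (\<Sum>x\<in>B. \<nu> x) - (\<Sum>x\<in>B. \<mu> x)"
  unfolding wasserstein_def
proof (rule cInf_greatest)
  show "(\<lambda>T. cost T) ` {T. transport_plan V \<mu> \<nu> T} \<noteq> {}"
    using product_transport_plan[OF assms(1-4)] by auto
next
  fix c assume "c \<in> (\<lambda>T. cost T) ` {T. transport_plan V \<mu> \<nu> T}"
  then obtain T where T: "transport_plan V \<mu> \<nu> T" and c: "c = cost T" by auto
  let ?i = "\<lambda>x. of_bool (x \<in> B) :: real"
  have "(\<Sum>x\<in>V. \<Sum>y\<in>V. (?i y - ?i x) * T x y) \<le> cost T"
  proof (intro sum_mono mult_right_mono)
    fix x y assume "x \<in> V" "y \<in> V"
    then show "?i y - ?i x \<le> real (gdist V E x y)" using gdist_ge_1[of x y] by (cases "x = y") auto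
    show "0 \<le> T x y" using T \<open>x \<in> V\<close> \<open>y \<in> V\<close> unfolding transport_plan_def by auto
  qed
  moreover have "(\<Sum>x\<in>V. \<Sum>y\<in>V. (?i y - ?i x) * T x y)
      = (\<Sum>y\<in>V. ?i y * (\<Sum>x\<in>V. T x y)) - (\<Sum>x\<in>V. ?i x * (\<Sum>y\<in>V. T x y))"
    by (simp add: left_diff_distrib sum_subtractf sum_distrib_left) (rule sum.swap)
  moreover have "\<dots> = (\<Sum>y\<in>V. ?i y * \<nu> y) - (\<Sum>x\<in>V. ?i x * \<mu> x)"
    using T unfolding transport_plan_def by simp
  moreover have "(\<Sum>x\<in>V. ?i x * f x) = (\<Sum>x\<in>B. f x)" for f :: "'a \<Rightarrow> real"
  proof -
    have "(\<Sum>x\<in>V. ?i x * f x) = (\<Sum>x\<in>V. if x \<in> B then f x else 0)" by (intro sum.cong) auto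
    also have "\<dots> = sum f (V \<inter> B)" by (rule sum.inter_restrict[OF finite_V, symmetric])
    finally show ?thesis using B by (simp add: Int_absorb1)
  qed
  ultimately show "(\<Sum>x\<in>B. \<nu> x) - (\<Sum>x\<in>B. \<mu> x) \<le> c" using c by simp
qed

text \<open>The plan keeps the common mass min \<mu> \<nu> in place and couples the excesses
  independently; every unit of the latter travels at most diam. If their total r is 0, then
  \<mu> = \<nu> and the coupling term vanishes because x / 0 = 0.\<close>

lemma wasserstein_le_diam_l1:
  assumes mn: "\<And>x. x \<in> V \<Longrightarrow> \<mu> x \<ge> 0" "\<And>x. x \<in> V \<Longrightarrow> \<nu> x \<ge> 0"
    and s: "(\<Sum>x\<in>V. \<mu> x) = 1" "(\<Sum>x\<in>V. \<nu> x) = 1"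
  shows "wasserstein V E \<mu> \<nu> \<le> real diam * (\<Sum>x\<in>V. \<bar>\<mu> x - \<nu> x\<bar>)"
proof -
  define m where "m x = min (\<mu> x) (\<nu> x)" for x
  define r where "r = (\<Sum>x\<in>V. \<mu> x - m x)"
  have r': "(\<Sum>x\<in>V. \<nu> x - m x) = r" unfolding r_def using s by (simp add: sum_subtractf)
  have excess_nonneg: "\<mu> x - m x \<ge> 0" "\<nu> x - m x \<ge> 0" for x unfolding m_def by auto
  have r_nonneg: "r \<ge> 0" unfolding r_def using excess_nonneg by (simp add: sum_nonneg)
  have r0: "r = 0 \<Longrightarrow> x \<in> V \<Longrightarrow> \<mu> x - m x = 0 \<and> \<nu> x - m x = 0" for x
    using sum_nonneg_eq_0_iff[OF finite_V, of "\<lambda>x. \<mu> x - m x"]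
      sum_nonneg_eq_0_iff[OF finite_V, of "\<lambda>x. \<nu> x - m x"] excess_nonneg r' unfolding r_def by auto
  define T where "T x y = (if x = y then m x else 0) + (\<mu> x - m x) * (\<nu> y - m y) / r" for x y
  have plan: "transport_plan V \<mu> \<nu> T"
    unfolding transport_plan_def
  proof (intro conjI ballI)
    fix x y assume "x \<in> V" "y \<in> V"
    then show "T x y \<ge> 0" unfolding T_def m_def using mn excess_nonneg r_nonneg by auto
  next
    fix x assume x: "x \<in> V"
    have "(\<Sum>y\<in>V. T x y) = m x + (\<mu> x - m x) * (\<Sum>y\<in>V. \<nu> y - m y) / r"
      unfolding T_def using x finite_V
      by (simp add: sum.distrib sum_divide_distrib[symmetric] sum_distrib_left)
    then show "(\<Sum>y\<in>V. T x y) = \<mu> x" using r0[OF _ x] r' by (cases "r = 0") auto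
  next
    fix y assume y: "y \<in> V"
    have "(\<Sum>x\<in>V. T x y) = m y + (\<Sum>x\<in>V. \<mu> x - m x) * (\<nu> y - m y) / r"
      unfolding T_def using y finite_V
      by (simp add: sum.distrib sum_divide_distrib[symmetric] sum_distrib_right)
    then show "(\<Sum>x\<in>V. T x y) = \<nu> y" using r0[OF _ y] unfolding r_def[symmetric] by (cases "r = 0") auto
  qed
  have "cost T = (\<Sum>x\<in>V. \<Sum>y\<in>V. real (gdist V E x y) * ((\<mu> x - m x) * (\<nu> y - m y) / r))"
    unfolding T_def by (intro sum.cong refl) (auto simp: distrib_left)
  also have "\<dots> \<le> (\<Sum>x\<in>V. \<Sum>y\<in>V. real diam * ((\<mu> x - m x) * (\<nu> y - m y) / r))"
    using gdist_le_diam excess_nonneg r_nonneg by (intro sum_mono mult_right_mono) auto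
  also have "\<dots> = real diam * ((\<Sum>x\<in>V. \<mu> x - m x) * (\<Sum>y\<in>V. \<nu> y - m y) / r)"
    by (simp add: sum_distrib_left sum_distrib_right sum_divide_distrib) (rule sum.swap)
  also have "\<dots> \<le> real diam * r" using r' unfolding r_def[symmetric] by (cases "r = 0") auto
  also have "\<dots> \<le> real diam * (\<Sum>x\<in>V. \<bar>\<mu> x - \<nu> x\<bar>)"
    unfolding r_def by (intro mult_left_mono sum_mono) (auto simp: m_def)
  finally show ?thesis using wasserstein_le_cost[OF plan] by simp
qed

lemma walk_dist_single_vertex:
  assumes "V = {u}" shows "walk_dist V E g u k t = of_bool (t = u)"
proof (induction k arbitrary: t)
  case (Suc k)
  have "deg V E u = 0" unfolding deg_def using assms adj_irrefl by auto
  then show ?case using Suc assms by (simp add: trans_prob_def)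
qed simp

lemma wasserstein_single_vertex:
  assumes "V = {u}" shows "wasserstein V E (walk_dist V E a u k) (walk_dist V E b u k) = 0"
proof -
  have at_u: "walk_dist V E g u k t = of_bool (t = u)" for g t
    by (rule walk_dist_single_vertex[OF assms])
  have plan: "transport_plan V (walk_dist V E a u k) (walk_dist V E b u k) (\<lambda>x y. of_bool (x = u \<and> y = u))"
    unfolding transport_plan_def at_u using assms by simp
  have "wasserstein V E (walk_dist V E a u k) (walk_dist V E b u k) \<le> 0"
    using wasserstein_le_cost[OF plan] gdist_self[of u] assms by simp
  moreover have "wasserstein V E (walk_dist V E a u k) (walk_dist V E b u k) \<ge> 0"
    using wasserstein_ge_mass_diff[of _ _ "{}"] unfolding at_u using assms by simp
  ultimately show ?thesis by simp
qed

lemma card_V_ge_2_if_wasserstein_limit: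
  assumes u: "u \<in> V" and v: "v \<in> V" and "L \<noteq> 0"
    and lim: "(\<lambda>k. wasserstein V E (walk_dist V E a u k) (walk_dist V E b v k)) \<longlonglongrightarrow> L"
  shows "card V \<ge> 2"
proof (rule ccontr)
  assume "\<not> card V \<ge> 2"
  moreover have "card V \<ge> 1" using u finite_V by (metis One_nat_def Suc_leI card_gt_0_iff empty_iff)
  ultimately have "card V = 1" by simp
  then obtain z where "V = {z}" by (rule card_1_singletonE)
  then have "V = {u}" "v = u" using u v by auto
  then have "(\<lambda>k. wasserstein V E (walk_dist V E a u k) (walk_dist V E b v k)) \<longlonglongrightarrow> 0"
    using wasserstein_single_vertex by simp
  with lim \<open>L \<noteq> 0\<close> show False using LIMSEQ_unique by blast
qed

lemma wasserstein_tendsto_0_if_common_limit: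
  assumes \<mu>: "\<And>k x. x \<in> V \<Longrightarrow> \<mu> k x \<ge> 0" "\<And>k. (\<Sum>x\<in>V. \<mu> k x) = 1"
    and \<nu>: "\<And>k x. x \<in> V \<Longrightarrow> \<nu> k x \<ge> 0" "\<And>k. (\<Sum>x\<in>V. \<nu> k x) = 1"
    and lim: "(\<lambda>k. \<Sum>x\<in>V. \<bar>\<mu> k x - p k x\<bar>) \<longlonglongrightarrow> 0" "(\<lambda>k. \<Sum>x\<in>V. \<bar>\<nu> k x - p k x\<bar>) \<longlonglongrightarrow> 0"
  shows "(\<lambda>k. wasserstein V E (\<mu> k) (\<nu> k)) \<longlonglongrightarrow> 0"
proof (rule tendsto_sandwich[of "\<lambda>_. 0"])
  let ?d = "\<lambda>k. (\<Sum>x\<in>V. \<bar>\<mu> k x - p k x\<bar>) + (\<Sum>x\<in>V. \<bar>\<nu> k x - p k x\<bar>)"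
  show "\<forall>\<^sub>F k in sequentially. 0 \<le> wasserstein V E (\<mu> k) (\<nu> k)"
    using wasserstein_ge_mass_diff[of "\<mu> _" "\<nu> _" "{}"] \<mu> \<nu> by simp
  have "wasserstein V E (\<mu> k) (\<nu> k) \<le> real diam * ?d k" for k
  proof -
    have "(\<Sum>x\<in>V. \<bar>\<mu> k x - \<nu> k x\<bar>) \<le> ?d k"
      unfolding sum.distrib[symmetric] by (intro sum_mono) auto
    then show ?thesis
      using wasserstein_le_diam_l1[of "\<mu> k" "\<nu> k"] \<mu> \<nu> by (meson order_trans mult_left_mono of_nat_0_le_iff)
  qed
  then show "\<forall>\<^sub>F k in sequentially. wasserstein V E (\<mu> k) (\<nu> k) \<le> real diam * ?d k" by simp
  show "(\<lambda>k. real diam * ?d k) \<longlonglongrightarrow> 0"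
    using tendsto_mult_right_zero[OF tendsto_add_zero[OF lim]] by simp
qed simp

end

locale nontrivial_graph = connected_simple_graph +
  assumes two_vertices: "card V \<ge> 2"
begin

lemma ex_adj: "x \<in> V \<Longrightarrow> \<exists>y. E x y"
proof -
  assume x: "x \<in> V"
  obtain y where y: "y \<in> V" "y \<noteq> x"
    using two_vertices x
    by (metis card_2_iff' card_le_Suc0_iff_eq finite_V not_less_eq_eq numeral_2_eq_2)
  obtain n where "(x, y) \<in> adj ^^ n" using walk_exists x y by auto
  then show ?thesis using y(2)
  proof (induction n arbitrary: y)
    case (Suc n)
    then obtain z where "(x, z) \<in> adj ^^ n" "E z y" by (auto elim: relpow_Suc_E simp: adj_iff)
    then show ?case using Suc.IH by (cases "z = x") auto
  qed simp
qed

lemma deg_pos: "x \<in> V \<Longrightarrow> deg V E x > 0"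
  using ex_adj[of x] unfolding deg_def by (auto simp: card_gt_0_iff finite_V dest: adj_in_V)

lemma walk_extend_even:
  assumes walk: "(x, y) \<in> adj ^^ n" and y: "y \<in> V" and "n \<le> m" "even (m - n)"
  shows "(x, y) \<in> adj ^^ m"
proof -
  obtain j where m: "m = n + 2 * j" using assms(3,4) by (metis dvd_def le_add_diff_inverse)
  have "(x, y) \<in> adj ^^ (n + 2 * i)" for i
  proof (induction i)
    case (Suc i)
    obtain z where z: "E y z" using ex_adj[OF y] by auto
    have "(x, z) \<in> adj ^^ Suc (n + 2 * i)" using Suc z by (auto intro: relpow_Suc_I simp: adj_iff)
    then have "(x, y) \<in> adj ^^ Suc (Suc (n + 2 * i))"
      using z adj_sym by (auto intro: relpow_Suc_I simp: adj_iff)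
    then show ?case by simp
  qed (simp add: walk)
  then show ?thesis unfolding m .
qed

section \<open>Lazy random walks\<close>

abbreviation P :: "real \<Rightarrow> 'a \<Rightarrow> 'a \<Rightarrow> real" where
  "P g \<equiv> trans_prob V E g"

abbreviation law :: "real \<Rightarrow> 'a \<Rightarrow> nat \<Rightarrow> 'a \<Rightarrow> real" where
  "law g \<equiv> walk_dist V E g"

lemma trans_prob_eq:
  "s \<in> V \<Longrightarrow> P g s t = (if s = t then g else 0) + (if E s t then (1 - g) / real (deg V E s) else 0)"
  using deg_pos[of s] adj_irrefl[of s] unfolding trans_prob_def by auto

lemma trans_prob_nonneg: "0 \<le> g \<Longrightarrow> g \<le> 1 \<Longrightarrow> P g s t \<ge> 0"
  unfolding trans_prob_def by auto

lemma trans_prob_adj_ge: "E s t \<Longrightarrow> g \<le> 1 \<Longrightarrow> P g s t \<ge> (1 - g) / real (card V)"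
proof -
  assume st: "E s t" and g: "g \<le> 1"
  then have s: "s \<in> V" using adj_in_V by auto
  have "s \<noteq> t" using st adj_irrefl by auto
  then have "P g s t = (1 - g) / real (deg V E s)" using st by (simp add: trans_prob_eq[OF s])
  then show ?thesis using deg_le_card[of s] deg_pos[OF s] g by (simp add: frac_le)
qed

lemma sum_trans_prob: "s \<in> V \<Longrightarrow> (\<Sum>t\<in>V. P g s t) = 1"
proof -
  assume s: "s \<in> V"
  have "(\<Sum>t\<in>V. P g s t)
      = (\<Sum>t\<in>V. if s = t then g else 0) + (\<Sum>t\<in>V. if E s t then (1 - g) / real (deg V E s) else 0)"
    using s by (simp add: trans_prob_eq sum.distrib)
  also have "(\<Sum>t\<in>V. if E s t then (1 - g) / real (deg V E s) else 0)
      = (1 - g) / real (deg V E s) * (\<Sum>t\<in>V. if E s t then 1 else 0)"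
    by (simp add: sum_distrib_left if_distrib cong: if_cong)
  also have "\<dots> = 1 - g" using deg_pos[OF s] by (simp add: deg_eq_sum[symmetric])
  finally show ?thesis using s finite_V by simp
qed

lemma law_nonneg: "0 \<le> g \<Longrightarrow> g \<le> 1 \<Longrightarrow> law g w k t \<ge> 0"
  by (induction k arbitrary: t) (auto intro!: sum_nonneg mult_nonneg_nonneg trans_prob_nonneg)

lemma sum_law: "w \<in> V \<Longrightarrow> (\<Sum>t\<in>V. law g w k t) = 1"
proof (induction k)
  case (Suc k)
  have "(\<Sum>t\<in>V. law g w (Suc k) t) = (\<Sum>s\<in>V. law g w k s * (\<Sum>t\<in>V. P g s t))"
    by (simp add: sum_distrib_left) (rule sum.swap)
  then show ?case using Suc by (simp add: sum_trans_prob)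
qed (simp add: finite_V)

lemma evolve_by_law:
  assumes step: "\<And>k t. t \<in> V \<Longrightarrow> f (Suc k) t = (\<Sum>s\<in>V. f k s * P g s t)"
  shows "t \<in> V \<Longrightarrow> f (k + n) t = (\<Sum>s\<in>V. f k s * law g s n t)"
proof (induction n arbitrary: t)
  case 0
  then show ?case using finite_V by (simp add: if_distrib cong: if_cong)
next
  case (Suc n)
  have "f (k + Suc n) t = (\<Sum>s'\<in>V. (\<Sum>s\<in>V. f k s * law g s n s') * P g s' t)"
    using step Suc by simp
  also have "\<dots> = (\<Sum>s\<in>V. f k s * (\<Sum>s'\<in>V. law g s n s' * P g s' t))"
    by (simp add: sum_distrib_left sum_distrib_right mult.assoc) (rule sum.swap)
  finally show ?case by simp
qed

lemma law_ge_pow: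
  assumes "R \<subseteq> V \<times> V" and "\<And>a b. (a, b) \<in> R \<Longrightarrow> P g a b \<ge> c" and "c \<ge> 0"
    and "0 \<le> g" "g \<le> 1"
  shows "(x, y) \<in> R ^^ n \<Longrightarrow> law g x n y \<ge> c ^ n"
proof (induction n arbitrary: y)
  case (Suc n)
  then obtain z where z: "(x, z) \<in> R ^^ n" "(z, y) \<in> R" by (auto elim: relpow_Suc_E)
  have "c ^ Suc n \<le> law g x n z * P g z y"
    using Suc.IH[OF z(1)] assms z by (simp add: mult_mono' mult.commute)
  also have "\<dots> \<le> (\<Sum>s\<in>V. law g x n s * P g s y)"
    using z(2) assms finite_V by (intro member_le_sum) (auto intro!: mult_nonneg_nonneg law_nonneg trans_prob_nonneg)
  finally show ?case by simp
qed simp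

definition vol :: real where
  "vol = (\<Sum>y\<in>V. real (deg V E y))"

definition stat_dist :: "'a \<Rightarrow> real" where
  "stat_dist x = real (deg V E x) / vol"

lemma vol_pos: "vol > 0"
proof -
  obtain x where "x \<in> V" using V_nonempty by auto
  then show ?thesis unfolding vol_def using deg_pos finite_V by (metis of_nat_0_le_iff of_nat_0_less_iff sum_pos2)
qed

lemma sum_stat_dist: "(\<Sum>x\<in>V. stat_dist x) = 1"
  unfolding stat_dist_def using vol_pos by (simp add: sum_divide_distrib[symmetric] vol_def)

lemma stat_dist_stationary:
  assumes t: "t \<in> V" shows "(\<Sum>s\<in>V. stat_dist s * P g s t) = stat_dist t"
proof -
  have "stat_dist s * P g s t = (if s = t then g * stat_dist t else 0) + (1 - g) / vol * (if E s t then 1 else 0)"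
    if s: "s \<in> V" for s
    using deg_pos[OF s] vol_pos adj_irrefl[of s] by (auto simp: trans_prob_eq[OF s] stat_dist_def)
  then have "(\<Sum>s\<in>V. stat_dist s * P g s t)
      = (\<Sum>s\<in>V. if s = t then g * stat_dist t else 0) + (\<Sum>s\<in>V. (1 - g) / vol * (if E s t then 1 else 0))"
    by (simp add: sum.distrib)
  also have "\<dots> = (\<Sum>s\<in>V. if s = t then g * stat_dist t else 0) + (1 - g) / vol * (\<Sum>s\<in>V. if E s t then 1 else 0)"
    by (simp add: sum_distrib_left)
  also have "\<dots> = stat_dist t"
    using t finite_V vol_pos by (simp add: deg_eq_sum'[symmetric] stat_dist_def field_simps)
  finally show ?thesis .
qed

text \<open>Doeblin's argument: since d has total mass 0, the part c of K common to all rows is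
  annihilated, and the remaining kernel has row sums 1 - c * card A.\<close>

lemma l1_contraction:
  fixes d :: "'a \<Rightarrow> real" and K :: "'a \<Rightarrow> 'a \<Rightarrow> real"
  assumes supp: "\<And>x. x \<in> V \<Longrightarrow> x \<notin> D \<Longrightarrow> d x = 0" and mass: "(\<Sum>x\<in>V. d x) = 0"
    and minor: "\<And>x y. x \<in> D \<Longrightarrow> y \<in> V \<Longrightarrow> K x y \<ge> c * of_bool (y \<in> A)"
    and rows: "\<And>x. x \<in> D \<Longrightarrow> (\<Sum>y\<in>V. K x y) = 1" and "A \<subseteq> V"
  shows "(\<Sum>y\<in>V. \<bar>\<Sum>x\<in>V. d x * K x y\<bar>) \<le> (1 - c * card A) * (\<Sum>x\<in>V. \<bar>d x\<bar>)"
proof -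
  define K' where "K' x y = K x y - c * of_bool (y \<in> A)" for x y
  have reduce: "(\<Sum>x\<in>V. d x * K x y) = (\<Sum>x\<in>V. d x * K' x y)" for y
  proof -
    have "(\<Sum>x\<in>V. d x * K x y) = (\<Sum>x\<in>V. d x * K' x y) + (\<Sum>x\<in>V. d x) * (c * of_bool (y \<in> A))"
      unfolding K'_def by (simp add: algebra_simps sum.distrib sum_distrib_right sum_subtractf sum_distrib_left)
    then show ?thesis using mass by simp
  qed
  have abs_eq: "\<bar>d x * K' x y\<bar> = \<bar>d x\<bar> * K' x y" if "x \<in> V" "y \<in> V" for x y
    using minor[OF _ that(2), of x] supp[OF that(1)] by (cases "x \<in> D") (auto simp: K'_def abs_mult)
  have row_eq: "\<bar>d x\<bar> * (\<Sum>y\<in>V. K' x y) = \<bar>d x\<bar> * (1 - c * card A)" if "x \<in> V" for x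
  proof (cases "x \<in> D")
    case True
    have "(\<Sum>y\<in>V. of_bool (y \<in> A) :: real) = card A"
      using \<open>A \<subseteq> V\<close> finite_V by (simp add: of_bool_def sum.If_cases Int_absorb1)
    then show ?thesis using rows[OF True] by (simp add: K'_def sum_subtractf sum_distrib_left[symmetric])
  qed (use supp that in simp)
  have "(\<Sum>y\<in>V. \<bar>\<Sum>x\<in>V. d x * K x y\<bar>) \<le> (\<Sum>y\<in>V. \<Sum>x\<in>V. \<bar>d x\<bar> * K' x y)"
    unfolding reduce using abs_eq by (intro sum_mono) (metis (no_types, lifting) sum.cong sum_abs)
  also have "\<dots> = (\<Sum>x\<in>V. \<bar>d x\<bar> * (\<Sum>y\<in>V. K' x y))"
    by (subst sum.swap) (simp add: sum_distrib_left)
  also have "\<dots> = (\<Sum>x\<in>V. \<bar>d x\<bar> * (1 - c * card A))" using row_eq by (intro sum.cong) auto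
  finally show ?thesis by (simp add: sum_distrib_right mult.commute)
qed

lemma l1_tendsto_0_by_minorization:
  fixes f :: "nat \<Rightarrow> 'a \<Rightarrow> real" and D :: "nat \<Rightarrow> 'a set"
  assumes step: "\<And>k t. t \<in> V \<Longrightarrow> f (Suc k) t = (\<Sum>s\<in>V. f k s * P g s t)"
    and g: "0 \<le> g" "g \<le> 1"
    and supp: "\<And>k x. x \<in> V \<Longrightarrow> x \<notin> D k \<Longrightarrow> f k x = 0"
    and D: "\<And>k. D k \<subseteq> V" "\<And>k. D k \<noteq> {}"
    and mass: "\<And>k. (\<Sum>x\<in>V. f k x) = 0"
    and "c > 0" and minor: "\<And>k x y. x \<in> D k \<Longrightarrow> y \<in> D k \<Longrightarrow> law g x L y \<ge> c"
  shows "(\<lambda>k. \<Sum>t\<in>V. \<bar>f k t\<bar>) \<longlonglongrightarrow> 0"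
proof (rule tendsto_0_if_contracting)
  let ?e = "\<lambda>k. \<Sum>t\<in>V. \<bar>f k t\<bar>"
  have evolve: "?e (k + n) = (\<Sum>y\<in>V. \<bar>\<Sum>x\<in>V. f k x * law g x n y\<bar>)" for k n
    using evolve_by_law[of f g, OF step] by simp
  have law_rows: "(\<Sum>y\<in>V. law g x n y) = 1" if "x \<in> D k" for x n k
    using that D sum_law by blast
  show "?e k \<ge> 0" for k by (simp add: sum_nonneg)
  show "?e (Suc k) \<le> ?e k" for k
  proof -
    have "?e (k + 1) \<le> (1 - 0 * real (card ({} :: 'a set))) * ?e k"
      unfolding evolve
      by (rule l1_contraction[where D = "D k" and c = 0 and A = "{}"])
        (use supp mass law_rows law_nonneg[OF g] in \<open>auto simp del: walk_dist.simps\<close>)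
    then show ?thesis by simp
  qed
  show "?e (k + L) \<le> (1 - c) * ?e k" for k
  proof -
    have "?e (k + L) \<le> (1 - c * card (D k)) * ?e k"
      unfolding evolve
      by (rule l1_contraction[where D = "D k"])
        (use supp mass law_rows minor D law_nonneg[OF g] in \<open>auto simp del: walk_dist.simps\<close>)
    also have "\<dots> \<le> (1 - c) * ?e k"
    proof (intro mult_right_mono)
      have "card (D k) \<ge> 1"
        using D finite_V by (metis One_nat_def Suc_leI card_gt_0_iff finite_subset)
      then show "1 - c * card (D k) \<le> 1 - c" using \<open>c > 0\<close> by simp
    qed (simp add: sum_nonneg)
    finally show ?thesis .
  qed
  show "1 - c < 1" using \<open>c > 0\<close> by simp
qed

section \<open>Bipartite graphs\<close>

definition proper_colouring :: "('a \<Rightarrow> bool) \<Rightarrow> bool" where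
  "proper_colouring col \<longleftrightarrow> (\<forall>x y. E x y \<longrightarrow> col x \<noteq> col y)"

definition bipartite :: bool where
  "bipartite \<longleftrightarrow> (\<exists>col. proper_colouring col)"

lemma walk_parity:
  assumes "proper_colouring col"
  shows "(x, y) \<in> adj ^^ n \<Longrightarrow> col x = col y \<longleftrightarrow> even n"
proof (induction n arbitrary: y)
  case (Suc n)
  then obtain z where "(x, z) \<in> adj ^^ n" "E z y" by (auto elim: relpow_Suc_E simp: adj_iff)
  then show ?case using Suc.IH assms unfolding proper_colouring_def by (metis (full_types) even_Suc)
qed simp

text \<open>Otherwise the parity of the distance from x0 would be a proper colouring.\<close>

lemma short_odd_closed_walk:
  assumes "\<not> bipartite" and x0: "x0 \<in> V"
  obtains n where "odd n" "n \<le> 2 * diam + 1" "(x0, x0) \<in> adj ^^ n"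
proof -
  have "\<not> proper_colouring (\<lambda>x. even (gdist V E x0 x))"
    using assms(1) unfolding bipartite_def by blast
  then obtain a b where ab: "E a b" "even (gdist V E x0 a) = even (gdist V E x0 b)"
    unfolding proper_colouring_def by blast
  then have a: "a \<in> V" and b: "b \<in> V" using adj_in_V by auto
  have "(x0, b) \<in> adj ^^ (gdist V E x0 a + 1)"
    using gdist_walk[OF x0 a] ab(1) by (auto intro: relpow_Suc_I simp: adj_iff)
  then have "(x0, x0) \<in> adj ^^ (gdist V E x0 a + 1 + gdist V E x0 b)"
    using walk_sym[OF gdist_walk[OF x0 b]] by (rule relpow_trans)
  moreover have "gdist V E x0 a + 1 + gdist V E x0 b \<le> 2 * diam + 1"
    using gdist_le_diam[OF x0 a] gdist_le_diam[OF x0 b] by simp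
  moreover have "odd (gdist V E x0 a + 1 + gdist V E x0 b)" using ab(2) by simp
  ultimately show ?thesis using that by blast
qed

lemma nonbipartite_walks_of_length:
  assumes "\<not> bipartite" and x: "x \<in> V" and y: "y \<in> V"
  shows "(x, y) \<in> adj ^^ (4 * diam + 2)"
proof -
  obtain c where c: "odd c" "c \<le> 2 * diam + 1" "(x, x) \<in> adj ^^ c"
    using short_odd_closed_walk[OF assms(1) x] .
  let ?d = "gdist V E x y"
  have d: "(x, y) \<in> adj ^^ ?d" "?d \<le> diam" using gdist_walk[OF x y] gdist_le_diam[OF x y] by auto
  have "(x, y) \<in> adj ^^ (c + ?d)" using relpow_trans[OF c(3) d(1)] .
  obtain n where n: "(x, y) \<in> adj ^^ n" "even n" "n \<le> 4 * diam + 2"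
  proof (cases "even ?d")
    case True then show ?thesis using that d by simp
  next
    case False then show ?thesis using that[OF \<open>(x, y) \<in> adj ^^ (c + ?d)\<close>] c d by simp
  qed
  show ?thesis by (rule walk_extend_even[OF n(1) y]) (use n in simp_all)
qed

lemma lazy_walk_extend:
  "(x, y) \<in> adj ^^ m \<Longrightarrow> m \<le> n \<Longrightarrow> y \<in> V \<Longrightarrow> (x, y) \<in> (adj \<union> Id_on V) ^^ n"
proof (induction n arbitrary: m y)
  case (Suc n)
  show ?case
  proof (cases "m = Suc n")
    case True
    with Suc.prems obtain z where "(x, z) \<in> adj ^^ n" "(z, y) \<in> adj" by (auto elim: relpow_Suc_E)
    moreover have "z \<in> V" using \<open>(z, y) \<in> adj\<close> adj_subset by auto
    ultimately have "(x, z) \<in> (adj \<union> Id_on V) ^^ n" using Suc.IH by blast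
    then show ?thesis using \<open>(z, y) \<in> adj\<close> by (auto intro: relpow_Suc_I)
  next
    case False
    then have "(x, y) \<in> (adj \<union> Id_on V) ^^ n" using Suc by simp
    then show ?thesis by (rule relpow_Suc_I) (use Suc.prems in auto)
  qed
qed simp

lemma law_uniformly_positive:
  assumes g: "0 \<le> g" "g < 1" and aperiodic: "g > 0 \<or> \<not> bipartite"
  obtains L c where "c > 0" "\<And>x y. x \<in> V \<Longrightarrow> y \<in> V \<Longrightarrow> law g x L y \<ge> c"
proof (cases "g > 0")
  case True
  define c where "c = min g ((1 - g) / real (card V))"
  have "c > 0" using True g two_vertices unfolding c_def by simp
  have step: "P g a b \<ge> c" if "(a, b) \<in> adj \<union> Id_on V" for a b
    using that trans_prob_adj_ge[of a b g] g trans_prob_eq[of a g a] adj_irrefl[of a]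
    unfolding c_def by (auto simp: adj_iff)
  have "law g x diam y \<ge> c ^ diam" if "x \<in> V" "y \<in> V" for x y
  proof (rule law_ge_pow[OF _ step])
    show "(x, y) \<in> (adj \<union> Id_on V) ^^ diam"
      using lazy_walk_extend gdist_walk gdist_le_diam that by blast
  qed (use adj_subset \<open>c > 0\<close> g in auto)
  moreover have "c ^ diam > 0" using \<open>c > 0\<close> by simp
  ultimately show ?thesis using that by blast
next
  case False
  define c where "c = (1 - g) / real (card V)"
  have "c > 0" using g two_vertices unfolding c_def by simp
  have step: "P g a b \<ge> c" if "(a, b) \<in> adj" for a b
    using trans_prob_adj_ge[of a b g] that g unfolding c_def by (auto simp: adj_iff)
  have "law g x (4 * diam + 2) y \<ge> c ^ (4 * diam + 2)" if "x \<in> V" "y \<in> V" for x y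
  proof (rule law_ge_pow[OF adj_subset step])
    show "(x, y) \<in> adj ^^ (4 * diam + 2)" using nonbipartite_walks_of_length False aperiodic that by blast
  qed (use \<open>c > 0\<close> g in auto)
  moreover have "c ^ (4 * diam + 2) > 0" using \<open>c > 0\<close> by simp
  ultimately show ?thesis using that by blast
qed

lemma law_tendsto_stat_dist:
  assumes u: "u \<in> V" and g: "0 \<le> g" "g < 1" and aperiodic: "g > 0 \<or> \<not> bipartite"
  shows "(\<lambda>k. \<Sum>t\<in>V. \<bar>law g u k t - stat_dist t\<bar>) \<longlonglongrightarrow> 0"
proof -
  obtain L c where c: "c > 0" "\<And>x y. x \<in> V \<Longrightarrow> y \<in> V \<Longrightarrow> law g x L y \<ge> c"
    using law_uniformly_positive[OF g aperiodic] by metis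
  have step: "law g u (Suc k) t - stat_dist t = (\<Sum>s\<in>V. (law g u k s - stat_dist s) * P g s t)"
    if "t \<in> V" for k t
    using stat_dist_stationary[OF that] by (simp add: left_diff_distrib sum_subtractf)
  have mass: "(\<Sum>x\<in>V. law g u k x - stat_dist x) = 0" for k
    using sum_law[OF u] sum_stat_dist by (simp add: sum_subtractf)
  show ?thesis
    by (rule l1_tendsto_0_by_minorization[where D = "\<lambda>_. V" and f = "\<lambda>k t. law g u k t - stat_dist t", OF step _ _ _ _ _ mass c])
      (use g V_nonempty in \<open>auto simp del: walk_dist.simps\<close>)
qed

definition bipartition_side :: "'a set \<Rightarrow> bool" where
  "bipartition_side A \<longleftrightarrow> A \<subseteq> V \<and> (\<forall>x y. E x y \<longrightarrow> x \<in> A \<longleftrightarrow> y \<notin> A)"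

lemma finite_bipartition_side: "bipartition_side A \<Longrightarrow> finite A"
  using finite_V unfolding bipartition_side_def by (auto intro: finite_subset)

lemma bipartition_side_complement: "bipartition_side A \<Longrightarrow> bipartition_side (V - A)"
  unfolding bipartition_side_def using adj_in_V by blast

text \<open>Each edge has exactly one end on either side, so both sides carry half the total degree.\<close>

lemma sum_deg_side:
  assumes "bipartition_side A"
  shows "(\<Sum>x\<in>A. real (deg V E x)) = (\<Sum>y\<in>V - A. real (deg V E y))"
proof -
  have A: "A \<subseteq> V" "\<And>x y. E x y \<Longrightarrow> x \<in> A \<longleftrightarrow> y \<notin> A"
    using assms unfolding bipartition_side_def by auto
  have in_A: "(\<Sum>x\<in>A. of_bool (E x y)) = (if y \<in> V - A then real (deg V E y) else 0)"
    if "y \<in> V" for y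
  proof (cases "y \<in> A")
    case False
    have "(\<Sum>x\<in>A. of_bool (E x y)) = (\<Sum>x\<in>V. of_bool (E x y) :: real)"
      by (rule sum.mono_neutral_left[OF finite_V A(1)]) (use A(2) False in auto)
    then show ?thesis using False that by (simp add: deg_eq_sum' of_bool_def)
  qed (use A(2) in \<open>auto intro!: sum.neutral\<close>)
  have "(\<Sum>x\<in>A. real (deg V E x)) = (\<Sum>y\<in>V. \<Sum>x\<in>A. of_bool (E x y))"
    by (simp add: deg_eq_sum of_bool_def) (rule sum.swap)
  also have "\<dots> = (\<Sum>y\<in>V. if y \<in> V - A then real (deg V E y) else 0)"
    using in_A by (intro sum.cong) auto
  also have "\<dots> = (\<Sum>y\<in>V - A. real (deg V E y))"
    by (rule sum.inter_restrict[OF finite_V, symmetric, THEN trans]) (simp add: Int_absorb1)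
  finally show ?thesis .
qed

lemma sum_stat_dist_side: "bipartition_side A \<Longrightarrow> (\<Sum>x\<in>A. stat_dist x) = 1 / 2"
proof -
  assume A: "bipartition_side A"
  then have "(\<Sum>x\<in>A. stat_dist x) = (\<Sum>x\<in>V - A. stat_dist x)"
    unfolding stat_dist_def sum_divide_distrib[symmetric] using sum_deg_side by simp
  moreover have "(\<Sum>x\<in>A. stat_dist x) + (\<Sum>x\<in>V - A. stat_dist x) = 1"
    using A sum_stat_dist sum.subset_diff[OF _ finite_V, of A stat_dist]
    unfolding bipartition_side_def by simp
  ultimately show ?thesis by simp
qed

text \<open>The limit law of the non-lazy walk on a bipartite graph: the stationary distribution
  conditioned on the side currently occupied.\<close>

definition side_stat :: "'a set \<Rightarrow> 'a \<Rightarrow> real" where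
  "side_stat A x = (if x \<in> A then 2 * stat_dist x else 0)"

lemma sum_side_stat: "bipartition_side A \<Longrightarrow> (\<Sum>x\<in>V. side_stat A x) = 1"
  using sum_stat_dist_side[of A]
  by (simp add: side_stat_def sum.If_cases finite_V bipartition_side_def Int_absorb1
      sum_distrib_left[symmetric])

lemma side_stat_step:
  assumes A: "bipartition_side A" and t: "t \<in> V"
  shows "(\<Sum>s\<in>V. side_stat A s * P 0 s t) = side_stat (V - A) t"
proof -
  have "side_stat A s * P 0 s t = 2 / vol * of_bool (s \<in> A \<and> E s t)" if s: "s \<in> V" for s
    using deg_pos[OF s] vol_pos adj_irrefl[of s]
    by (auto simp: trans_prob_eq[OF s] side_stat_def stat_dist_def)
  then have "(\<Sum>s\<in>V. side_stat A s * P 0 s t) = 2 / vol * (\<Sum>s\<in>V. of_bool (s \<in> A \<and> E s t))"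
    by (simp add: sum_distrib_left)
  also have "(\<Sum>s\<in>V. of_bool (s \<in> A \<and> E s t)) = (if t \<in> V - A then real (deg V E t) else 0)"
  proof (cases "t \<in> A")
    case True
    then show ?thesis using A unfolding bipartition_side_def by (auto intro!: sum.neutral)
  next
    case False
    then show ?thesis using A t unfolding bipartition_side_def
      by (auto simp: deg_eq_sum' of_bool_def intro!: sum.cong)
  qed
  finally show ?thesis using t by (simp add: side_stat_def stat_dist_def)
qed

definition parity_class :: "('a \<Rightarrow> bool) \<Rightarrow> 'a \<Rightarrow> nat \<Rightarrow> 'a set" where
  "parity_class col u k = {x \<in> V. (col x = col u) = even k}"

lemma parity_class_subset: "parity_class col u k \<subseteq> V"
  unfolding parity_class_def by auto

lemma parity_class_Suc: "parity_class col u (Suc k) = V - parity_class col u k"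
  unfolding parity_class_def by auto

lemma bipartition_side_parity_class:
  "proper_colouring col \<Longrightarrow> bipartition_side (parity_class col u k)"
  unfolding bipartition_side_def parity_class_def proper_colouring_def using adj_in_V by blast

lemma parity_class_nonempty:
  assumes "proper_colouring col" and u: "u \<in> V" shows "parity_class col u k \<noteq> {}"
proof -
  obtain z where z: "E u z" using ex_adj[OF u] by auto
  show ?thesis
  proof (cases "even k")
    case True
    then have "u \<in> parity_class col u k" using u unfolding parity_class_def by simp
    then show ?thesis by auto
  next
    case False
    then have "z \<in> parity_class col u k"
      using z adj_in_V assms(1) unfolding parity_class_def proper_colouring_def by auto
    then show ?thesis by auto
  qed
qed

lemma walk_if_law_0_nonzero: "law 0 u k t \<noteq> 0 \<Longrightarrow> (u, t) \<in> adj ^^ k"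
proof (induction k arbitrary: t)
  case (Suc k)
  then obtain s where s: "s \<in> V" "law 0 u k s * P 0 s t \<noteq> 0"
    by (auto elim: sum.not_neutral_contains_not_neutral)
  then have "E s t" using trans_prob_eq[OF s(1), of 0 t] by (auto split: if_splits)
  moreover have "(u, s) \<in> adj ^^ k" using Suc.IH s(2) by auto
  ultimately show ?case by (auto intro: relpow_Suc_I simp: adj_iff)
qed (auto split: if_splits)

lemma law_0_outside_parity_class:
  assumes "proper_colouring col" and "x \<notin> parity_class col u k" and "x \<in> V"
  shows "law 0 u k x = 0"
  using walk_parity[OF assms(1) walk_if_law_0_nonzero] assms(2,3) unfolding parity_class_def by auto

lemma law_0_tendsto_side_stat:
  assumes col: "proper_colouring col" and u: "u \<in> V"
  shows "(\<lambda>k. \<Sum>t\<in>V. \<bar>law 0 u k t - side_stat (parity_class col u k) t\<bar>) \<longlonglongrightarrow> 0"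
proof -
  let ?A = "parity_class col u"
  define c where "c = 1 / real (card V)"
  have "c > 0" using two_vertices unfolding c_def by simp
  have step: "law 0 u (Suc k) t - side_stat (?A (Suc k)) t
      = (\<Sum>s\<in>V. (law 0 u k s - side_stat (?A k) s) * P 0 s t)" if "t \<in> V" for k t
    using side_stat_step[OF bipartition_side_parity_class[OF col] that]
    by (simp add: parity_class_Suc left_diff_distrib sum_subtractf)
  have supp: "law 0 u k x - side_stat (?A k) x = 0" if "x \<in> V" "x \<notin> ?A k" for k x
    using law_0_outside_parity_class[OF col that(2,1)] that(2) by (simp add: side_stat_def)
  have mass: "(\<Sum>x\<in>V. law 0 u k x - side_stat (?A k) x) = 0" for k
    using sum_law[OF u] sum_side_stat[OF bipartition_side_parity_class[OF col]]
    by (simp add: sum_subtractf)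
  have minor: "law 0 x (2 * diam + 2) y \<ge> c ^ (2 * diam + 2)" if "x \<in> ?A k" "y \<in> ?A k" for k x y
  proof (rule law_ge_pow[OF adj_subset])
    have x: "x \<in> V" and y: "y \<in> V" using that parity_class_subset by auto
    have "even (gdist V E x y)"
      using walk_parity[OF col gdist_walk[OF x y]] that unfolding parity_class_def by auto
    moreover have "gdist V E x y \<le> 2 * diam + 2" using gdist_le_diam[OF x y] by simp
    ultimately show "(x, y) \<in> adj ^^ (2 * diam + 2)"
      by (intro walk_extend_even[OF gdist_walk[OF x y] y]) simp_all
    show "P 0 a b \<ge> c" if "(a, b) \<in> adj" for a b
      using trans_prob_adj_ge[of a b 0] that by (simp add: adj_iff c_def)
  qed (use \<open>c > 0\<close> in auto)
  show ?thesis
    by (rule l1_tendsto_0_by_minorization[where f = "\<lambda>k t. law 0 u k t - side_stat (?A k) t",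
          OF step _ _ supp parity_class_subset parity_class_nonempty[OF col u] mass _ minor])
      (use \<open>c > 0\<close> in auto)
qed

section \<open>Flows across a bipartition\<close>

definition row_sum :: "('a \<Rightarrow> 'a \<Rightarrow> real) \<Rightarrow> 'a \<Rightarrow> real" where
  "row_sum F x = (\<Sum>y\<in>V. F x y)"

definition col_sum :: "('a \<Rightarrow> 'a \<Rightarrow> real) \<Rightarrow> 'a \<Rightarrow> real" where
  "col_sum F y = (\<Sum>x\<in>V. F x y)"

lemma row_sum_add: "row_sum (\<lambda>x y. F x y + G x y) x = row_sum F x + row_sum G x"
  and row_sum_diff: "row_sum (\<lambda>x y. F x y - G x y) x = row_sum F x - row_sum G x"
  and row_sum_scale: "row_sum (\<lambda>x y. c * F x y) x = c * row_sum F x"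
  and row_sum_sum: "row_sum (\<lambda>x y. \<Sum>s\<in>S. H s x y) x = (\<Sum>s\<in>S. row_sum (H s) x)"
  unfolding row_sum_def by (simp_all add: sum.distrib sum_subtractf sum_distrib_left sum.swap[of _ V])

lemma col_sum_add: "col_sum (\<lambda>x y. F x y + G x y) y = col_sum F y + col_sum G y"
  and col_sum_diff: "col_sum (\<lambda>x y. F x y - G x y) y = col_sum F y - col_sum G y"
  and col_sum_scale: "col_sum (\<lambda>x y. c * F x y) y = c * col_sum F y"
  and col_sum_sum: "col_sum (\<lambda>x y. \<Sum>s\<in>S. H s x y) y = (\<Sum>s\<in>S. col_sum (H s) y)"
  unfolding col_sum_def by (simp_all add: sum.distrib sum_subtractf sum_distrib_left sum.swap[of _ V])

definition dirac :: "'a \<Rightarrow> 'a \<Rightarrow> real" where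
  "dirac a x = (if x = a then 1 else 0)"

lemma row_sum_dirac: "b \<in> V \<Longrightarrow> row_sum (\<lambda>x y. dirac a x * dirac b y) x = dirac a x"
  and col_sum_dirac: "a \<in> V \<Longrightarrow> col_sum (\<lambda>x y. dirac a x * dirac b y) y = dirac b y"
  unfolding row_sum_def col_sum_def dirac_def by (simp_all add: finite_V)

text \<open>Flows across the cut from A to V - A, as signed weights on the edges leaving A.\<close>

definition cut_supported :: "'a set \<Rightarrow> ('a \<Rightarrow> 'a \<Rightarrow> real) \<Rightarrow> bool" where
  "cut_supported A F \<longleftrightarrow> (\<forall>x y. F x y \<noteq> 0 \<longrightarrow> x \<in> A \<and> E x y)"

definition unit_flow :: "'a set \<Rightarrow> 'a \<Rightarrow> 'a \<Rightarrow> ('a \<Rightarrow> 'a \<Rightarrow> real) \<Rightarrow> bool" where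
  "unit_flow A s t F \<longleftrightarrow> cut_supported A F \<and>
     (\<forall>x\<in>A. row_sum F x = dirac s x) \<and> (\<forall>y\<in>V - A. col_sum F y = dirac t y)"

text \<open>Induction along a walk from s: each edge crossing the cut forwards adds a unit and each edge
  crossing it backwards removes one, so the flow always ends at the current vertex.\<close>

lemma walk_flow:
  assumes A: "bipartition_side A" and s: "s \<in> A"
  shows "(s, z) \<in> adj ^^ n \<Longrightarrow> \<exists>F. cut_supported A F \<and>
     (\<forall>x\<in>A. row_sum F x = dirac s x - (if z \<in> A then dirac z x else 0)) \<and>
     (\<forall>y\<in>V - A. col_sum F y = (if z \<notin> A then dirac z y else 0))"
proof (induction n arbitrary: z)
  case 0
  then have "z = s" by simp
  then show ?case using s by (intro exI[of _ "\<lambda>x y. 0"]) (auto simp: cut_supported_def row_sum_def col_sum_def)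
next
  case (Suc n)
  then obtain z' where z': "(s, z') \<in> adj ^^ n" "E z' z" by (auto elim: relpow_Suc_E simp: adj_iff)
  then have V: "z \<in> V" "z' \<in> V" and side: "z' \<in> A \<longleftrightarrow> z \<notin> A"
    using adj_in_V A unfolding bipartition_side_def by auto
  obtain F where F: "cut_supported A F"
    "\<forall>x\<in>A. row_sum F x = dirac s x - (if z' \<in> A then dirac z' x else 0)"
    "\<forall>y\<in>V - A. col_sum F y = (if z' \<notin> A then dirac z' y else 0)"
    using Suc.IH[OF z'(1)] by blast
  show ?case
  proof (cases "z' \<in> A")
    case True
    define F' where "F' x y = F x y + dirac z' x * dirac z y" for x y
    have "cut_supported A F'" using F(1) True z'(2) unfolding cut_supported_def F'_def dirac_def by auto
    moreover have "\<forall>x\<in>A. row_sum F' x = dirac s x - (if z \<in> A then dirac z x else 0)"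
      unfolding F'_def using F(2) True side row_sum_dirac[OF V(1)] by (simp add: row_sum_add)
    moreover have "\<forall>y\<in>V - A. col_sum F' y = (if z \<notin> A then dirac z y else 0)"
      unfolding F'_def using F(3) True side col_sum_dirac[OF V(2)] by (simp add: col_sum_add)
    ultimately show ?thesis by blast
  next
    case False
    define F' where "F' x y = F x y - dirac z x * dirac z' y" for x y
    have "cut_supported A F'"
      using F(1) False side z'(2) adj_sym unfolding cut_supported_def F'_def dirac_def by auto
    moreover have "\<forall>x\<in>A. row_sum F' x = dirac s x - (if z \<in> A then dirac z x else 0)"
      unfolding F'_def using F(2) False side row_sum_dirac[OF V(2)] by (simp add: row_sum_diff)
    moreover have "\<forall>y\<in>V - A. col_sum F' y = (if z \<notin> A then dirac z y else 0)"
      unfolding F'_def using F(3) False side col_sum_dirac[OF V(1)] by (simp add: col_sum_diff)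
    ultimately show ?thesis by blast
  qed
qed

lemma unit_flow_exists:
  assumes "bipartition_side A" "s \<in> A" "t \<in> V - A" shows "\<exists>F. unit_flow A s t F"
proof -
  have "s \<in> V" "t \<in> V" "t \<notin> A" using assms unfolding bipartition_side_def by auto
  then show ?thesis
    using walk_flow[OF assms(1,2) gdist_walk[of s t]] unfolding unit_flow_def by auto
qed

lemma unit_flows_bounded:
  assumes "bipartition_side A"
  obtains C F where "C \<ge> 0" "\<And>s t. s \<in> A \<Longrightarrow> t \<in> V - A \<Longrightarrow> unit_flow A s t (F s t)"
    "\<And>s t x y. s \<in> A \<Longrightarrow> t \<in> V - A \<Longrightarrow> \<bar>F s t x y\<bar> \<le> C"
proof -
  obtain F where F: "\<And>s t. s \<in> A \<Longrightarrow> t \<in> V - A \<Longrightarrow> unit_flow A s t (F s t)"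
    using unit_flow_exists[OF assms] by metis
  define C where "C = (\<Sum>s\<in>A. \<Sum>t\<in>V - A. \<Sum>x\<in>V. \<Sum>y\<in>V. \<bar>F s t x y\<bar>)"
  have "\<bar>F s t x y\<bar> \<le> C" if "s \<in> A" "t \<in> V - A" for s t x y
  proof (cases "x \<in> V \<and> y \<in> V")
    case True
    have "\<bar>F s t x y\<bar> \<le> (\<Sum>y\<in>V. \<bar>F s t x y\<bar>)" using True finite_V by (intro member_le_sum) auto
    also have "\<dots> \<le> (\<Sum>x\<in>V. \<Sum>y\<in>V. \<bar>F s t x y\<bar>)"
      using True finite_V by (intro member_le_sum[where f = "\<lambda>x. \<Sum>y\<in>V. \<bar>F s t x y\<bar>"]) (auto intro: sum_nonneg)
    also have "\<dots> \<le> (\<Sum>t\<in>V - A. \<Sum>x\<in>V. \<Sum>y\<in>V. \<bar>F s t x y\<bar>)"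
      using that finite_V by (intro member_le_sum[where f = "\<lambda>t. \<Sum>x\<in>V. \<Sum>y\<in>V. \<bar>F s t x y\<bar>"])
        (auto intro: sum_nonneg)
    also have "\<dots> \<le> C"
      unfolding C_def using that finite_bipartition_side[OF assms]
      by (intro member_le_sum[where f = "\<lambda>s. \<Sum>t\<in>V - A. \<Sum>x\<in>V. \<Sum>y\<in>V. \<bar>F s t x y\<bar>"])
        (auto intro: sum_nonneg)
    finally show ?thesis .
  next
    case False
    then have "F s t x y = 0"
      using F[OF that] adj_in_V unfolding unit_flow_def cut_supported_def by blast
    then show ?thesis unfolding C_def by (simp add: sum_nonneg)
  qed
  moreover have "C \<ge> 0" unfolding C_def by (simp add: sum_nonneg)
  ultimately show ?thesis using that F by blast
qed

definition stat_flow :: "'a set \<Rightarrow> 'a \<Rightarrow> 'a \<Rightarrow> real" where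
  "stat_flow A x y = of_bool (x \<in> A \<and> E x y) / vol"

lemma row_sum_stat_flow: "x \<in> A \<Longrightarrow> row_sum (stat_flow A) x = stat_dist x"
  by (simp add: row_sum_def stat_flow_def stat_dist_def deg_eq_sum of_bool_def sum_divide_distrib
      if_distrib cong: if_cong)

lemma col_sum_stat_flow: "bipartition_side A \<Longrightarrow> y \<in> V - A \<Longrightarrow> col_sum (stat_flow A) y = stat_dist y"
  unfolding bipartition_side_def
  by (auto simp: col_sum_def stat_flow_def stat_dist_def deg_eq_sum' sum_divide_distrib of_bool_def
      intro!: sum.cong)

context
  fixes A :: "'a set" and F :: "'a \<Rightarrow> 'a \<Rightarrow> 'a \<Rightarrow> 'a \<Rightarrow> real" and x0 y0 :: 'a
  assumes A: "bipartition_side A" and x0: "x0 \<in> A" and y0: "y0 \<in> V - A"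
    and F: "\<And>s t. s \<in> A \<Longrightarrow> t \<in> V - A \<Longrightarrow> unit_flow A s t (F s t)"
begin

text \<open>Route each a s to y0, feed each b t from x0, and cancel the doubly counted flow from x0
  to y0.\<close>

definition correction :: "('a \<Rightarrow> real) \<Rightarrow> ('a \<Rightarrow> real) \<Rightarrow> 'a \<Rightarrow> 'a \<Rightarrow> real" where
  "correction a b x y = (\<Sum>s\<in>A. a s * F s y0 x y) + (\<Sum>t\<in>V - A. b t * F x0 t x y)
     - (\<Sum>s\<in>A. a s) * F x0 y0 x y"

lemma cut_supported_correction: "cut_supported A (correction a b)"
proof -
  have "correction a b x y = 0" if "\<not> (x \<in> A \<and> E x y)" for x y
  proof -
    have "F s t x y = 0" if "s \<in> A" "t \<in> V - A" for s t
      using F[OF that] \<open>\<not> (x \<in> A \<and> E x y)\<close> unfolding unit_flow_def cut_supported_def by blast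
    then show ?thesis unfolding correction_def using x0 y0 by simp
  qed
  then show ?thesis unfolding cut_supported_def by blast
qed

lemma row_sum_correction:
  assumes "(\<Sum>x\<in>A. a x) = (\<Sum>y\<in>V - A. b y)" and x: "x \<in> A"
  shows "row_sum (correction a b) x = a x"
proof -
  have "row_sum (correction a b) x = (\<Sum>s\<in>A. a s * dirac s x) + (\<Sum>t\<in>V - A. b t) * dirac x0 x
      - (\<Sum>s\<in>A. a s) * dirac x0 x"
    unfolding correction_def[abs_def] row_sum_diff row_sum_add row_sum_sum row_sum_scale
    using F x x0 y0 unfolding unit_flow_def by (simp add: sum_distrib_right)
  also have "(\<Sum>s\<in>A. a s * dirac s x) = a x"
    using x finite_bipartition_side[OF A] unfolding dirac_def by (simp add: if_distrib cong: if_cong)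
  finally show ?thesis using assms(1) by simp
qed

lemma col_sum_correction:
  assumes y: "y \<in> V - A" shows "col_sum (correction a b) y = b y"
proof -
  have "col_sum (correction a b) y = (\<Sum>s\<in>A. a s) * dirac y0 y + (\<Sum>t\<in>V - A. b t * dirac t y)
      - (\<Sum>s\<in>A. a s) * dirac y0 y"
    unfolding correction_def[abs_def] col_sum_diff col_sum_add col_sum_sum col_sum_scale
    using F y x0 y0 unfolding unit_flow_def by (simp add: sum_distrib_right)
  also have "(\<Sum>t\<in>V - A. b t * dirac t y) = b y"
    using y finite_V unfolding dirac_def by (simp add: if_distrib cong: if_cong)
  finally show ?thesis by simp
qed

lemma abs_correction_le:
  assumes F_bound: "\<And>s t x y. s \<in> A \<Longrightarrow> t \<in> V - A \<Longrightarrow> \<bar>F s t x y\<bar> \<le> C" and "C \<ge> 0"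
  shows "\<bar>correction a b x y\<bar> \<le> 2 * C * ((\<Sum>x\<in>A. \<bar>a x\<bar>) + (\<Sum>y\<in>V - A. \<bar>b y\<bar>))"
proof -
  let ?sa = "\<Sum>x\<in>A. \<bar>a x\<bar>" and ?sb = "\<Sum>y\<in>V - A. \<bar>b y\<bar>"
  have "\<bar>\<Sum>s\<in>A. a s * F s y0 x y\<bar> \<le> (\<Sum>s\<in>A. \<bar>a s\<bar> * C)"
    using F_bound y0 by (intro order_trans[OF sum_abs] sum_mono) (simp add: abs_mult mult_left_mono)
  then have "\<bar>\<Sum>s\<in>A. a s * F s y0 x y\<bar> \<le> C * ?sa" by (simp add: sum_distrib_left mult.commute)
  moreover have "\<bar>\<Sum>t\<in>V - A. b t * F x0 t x y\<bar> \<le> (\<Sum>t\<in>V - A. \<bar>b t\<bar> * C)"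
    using F_bound x0 by (intro order_trans[OF sum_abs] sum_mono) (simp add: abs_mult mult_left_mono)
  then have "\<bar>\<Sum>t\<in>V - A. b t * F x0 t x y\<bar> \<le> C * ?sb" by (simp add: sum_distrib_left mult.commute)
  moreover have "\<bar>(\<Sum>s\<in>A. a s) * F x0 y0 x y\<bar> \<le> ?sa * C"
    unfolding abs_mult using F_bound[OF x0 y0] \<open>C \<ge> 0\<close> by (intro mult_mono sum_abs) auto
  ultimately have "\<bar>correction a b x y\<bar> \<le> C * ?sa + C * ?sb + ?sa * C"
    unfolding correction_def by linarith
  also have "\<dots> \<le> 2 * C * (?sa + ?sb)" using \<open>C \<ge> 0\<close> by (simp add: algebra_simps sum_nonneg)
  finally show ?thesis .
qed


text \<open>The stationary flow has the stationary marginals; nearby marginals are reached by adding a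
  correction small enough to keep every edge weight nonnegative.\<close>

lemma nonneg_flow_near_stat_dist:
  assumes F_bound: "\<And>s t x y. s \<in> A \<Longrightarrow> t \<in> V - A \<Longrightarrow> \<bar>F s t x y\<bar> \<le> C" and C: "C \<ge> 0"
    and small: "(\<Sum>x\<in>A. \<bar>a x - stat_dist x\<bar>) + (\<Sum>y\<in>V - A. \<bar>b y - stat_dist y\<bar>)
      < 1 / (vol * (2 * C + 1))"
    and balance: "(\<Sum>x\<in>A. a x) = (\<Sum>y\<in>V - A. b y)"
  shows "\<exists>w. cut_supported A w \<and> (\<forall>x y. w x y \<ge> 0) \<and>
    (\<forall>x\<in>A. row_sum w x = a x) \<and> (\<forall>y\<in>V - A. col_sum w y = b y)"
proof -
  let ?a = "\<lambda>x. a x - stat_dist x" and ?b = "\<lambda>y. b y - stat_dist y"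
  let ?H = "correction ?a ?b"
  have "(\<Sum>x\<in>A. ?a x) = (\<Sum>y\<in>V - A. ?b y)"
    using balance sum_stat_dist_side[OF A] sum_stat_dist_side[OF bipartition_side_complement[OF A]]
    by (simp add: sum_subtractf)
  note H_rows = row_sum_correction[OF this]
  have H_small: "\<bar>?H x y\<bar> \<le> 1 / vol" for x y
  proof -
    have "\<bar>?H x y\<bar> \<le> 2 * C * ((\<Sum>x\<in>A. \<bar>?a x\<bar>) + (\<Sum>y\<in>V - A. \<bar>?b y\<bar>))"
      by (rule abs_correction_le[OF F_bound C])
    also have "\<dots> \<le> 2 * C * (1 / (vol * (2 * C + 1)))" using small C by (intro mult_left_mono) auto
    also have "\<dots> = 2 * C / (2 * C + 1) * (1 / vol)" by simp
    also have "\<dots> \<le> 1 / vol" using vol_pos C by (intro mult_left_le_one_le) auto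
    finally show ?thesis .
  qed
  define w where "w x y = stat_flow A x y + ?H x y" for x y
  have "w x y \<ge> 0" for x y
  proof (cases "x \<in> A \<and> E x y")
    case True
    then show ?thesis using H_small[of x y] unfolding w_def stat_flow_def by simp
  next
    case False
    then have "?H x y = 0" using cut_supported_correction unfolding cut_supported_def by blast
    then show ?thesis using False unfolding w_def stat_flow_def by auto
  qed
  moreover have "cut_supported A w"
    using cut_supported_correction unfolding w_def stat_flow_def cut_supported_def by auto
  moreover have "row_sum w x = a x" if "x \<in> A" for x
    using H_rows[OF that] row_sum_stat_flow[OF that] unfolding w_def[abs_def] row_sum_add by simp
  moreover have "col_sum w y = b y" if "y \<in> V - A" for y
    using col_sum_correction[OF that] col_sum_stat_flow[OF A that] unfolding w_def[abs_def] col_sum_add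
    by simp
  ultimately show ?thesis by blast
qed
end

definition flow_radius :: "'a set \<Rightarrow> real \<Rightarrow> bool" where
  "flow_radius A \<delta> \<longleftrightarrow> (\<forall>a b.
     (\<Sum>x\<in>A. \<bar>a x - stat_dist x\<bar>) + (\<Sum>y\<in>V - A. \<bar>b y - stat_dist y\<bar>) < \<delta> \<longrightarrow>
     (\<Sum>x\<in>A. a x) = (\<Sum>y\<in>V - A. b y) \<longrightarrow>
     (\<exists>w. cut_supported A w \<and> (\<forall>x y. w x y \<ge> 0) \<and>
        (\<forall>x\<in>A. row_sum w x = a x) \<and> (\<forall>y\<in>V - A. col_sum w y = b y)))"

lemma flow_radius_mono: "flow_radius A \<delta> \<Longrightarrow> \<delta>' \<le> \<delta> \<Longrightarrow> flow_radius A \<delta>'"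
  unfolding flow_radius_def by (meson order_less_le_trans)

lemma flow_radius_pos:
  assumes A: "bipartition_side A" and "A \<noteq> {}"
  shows "\<exists>\<delta>>0. flow_radius A \<delta>"
proof -
  obtain x0 where x0: "x0 \<in> A" using \<open>A \<noteq> {}\<close> by auto
  have "x0 \<in> V" using x0 A unfolding bipartition_side_def by auto
  then obtain y0 where "E x0 y0" using ex_adj by blast
  then have y0: "y0 \<in> V - A" using x0 A adj_in_V unfolding bipartition_side_def by auto
  obtain C F where C: "C \<ge> 0" and F: "\<And>s t. s \<in> A \<Longrightarrow> t \<in> V - A \<Longrightarrow> unit_flow A s t (F s t)"
    and F_bound: "\<And>s t x y. s \<in> A \<Longrightarrow> t \<in> V - A \<Longrightarrow> \<bar>F s t x y\<bar> \<le> C"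
    using unit_flows_bounded[OF A] by blast
  have "1 / (vol * (2 * C + 1)) > 0" using vol_pos C by simp
  moreover have "flow_radius A (1 / (vol * (2 * C + 1)))"
    unfolding flow_radius_def using nonneg_flow_near_stat_dist[OF A x0 y0 F F_bound C] by blast
  ultimately show ?thesis by blast
qed

section \<open>Long-run Wasserstein distance\<close>

context
  fixes A :: "'a set" and \<mu> \<nu> :: "'a \<Rightarrow> real" and w :: "'a \<Rightarrow> 'a \<Rightarrow> real"
  assumes A: "bipartition_side A" and \<mu>_supp: "\<And>x. x \<in> V \<Longrightarrow> x \<notin> A \<Longrightarrow> \<mu> x = 0"
    and \<nu>_nonneg: "\<And>x. \<nu> x \<ge> 0"
    and w_cut: "cut_supported A w" and w_nonneg: "\<And>x y. w x y \<ge> 0"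
    and rows: "\<And>x. x \<in> A \<Longrightarrow> row_sum w x = \<mu> x - \<nu> x"
    and cols: "\<And>y. y \<in> V - A \<Longrightarrow> col_sum w y = \<nu> y"
begin

text \<open>The plan leaves \<nu> in place on A and ships the surplus of \<mu> across single edges.\<close>

definition cut_flow_plan :: "'a \<Rightarrow> 'a \<Rightarrow> real" where
  "cut_flow_plan x y = (if x = y \<and> x \<in> A then \<nu> x else 0) + w x y"

private lemma cut_flow_support: "w x y \<noteq> 0 \<Longrightarrow> x \<in> A \<and> y \<notin> A \<and> E x y"
  using w_cut A unfolding cut_supported_def bipartition_side_def by blast

private lemma col_sum_cut_flow_inside: "y \<in> A \<Longrightarrow> col_sum w y = 0"
  unfolding col_sum_def by (intro sum.neutral) (use cut_flow_support in blast)

lemma transport_plan_cut_flow_plan: "transport_plan V \<mu> \<nu> cut_flow_plan"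
  unfolding transport_plan_def
proof (intro conjI ballI)
  show "cut_flow_plan x y \<ge> 0" for x y unfolding cut_flow_plan_def using w_nonneg \<nu>_nonneg by simp
  show "(\<Sum>y\<in>V. cut_flow_plan x y) = \<mu> x" if "x \<in> V" for x
  proof -
    have "row_sum w x = 0" if "x \<notin> A"
      unfolding row_sum_def by (intro sum.neutral) (use cut_flow_support that in blast)
    moreover have "(\<Sum>y\<in>V. cut_flow_plan x y) = (if x \<in> A then \<nu> x else 0) + row_sum w x"
      unfolding cut_flow_plan_def row_sum_def sum.distrib using \<open>x \<in> V\<close> finite_V by (cases "x \<in> A") simp_all
    ultimately show ?thesis using rows \<mu>_supp[OF that] by (cases "x \<in> A") simp_all
  qed
  show "(\<Sum>x\<in>V. cut_flow_plan x y) = \<nu> y" if "y \<in> V" for y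
  proof -
    have "(\<Sum>x\<in>V. if x = y \<and> x \<in> A then \<nu> x else 0)
        = (\<Sum>x\<in>V. if x = y then (if y \<in> A then \<nu> y else 0) else 0)"
      by (intro sum.cong) auto
    then have "(\<Sum>x\<in>V. cut_flow_plan x y) = (if y \<in> A then \<nu> y else 0) + col_sum w y"
      unfolding cut_flow_plan_def col_sum_def sum.distrib using that finite_V by simp
    then show ?thesis using cols col_sum_cut_flow_inside that by (cases "y \<in> A") simp_all
  qed
qed

lemma cost_cut_flow_plan: "cost cut_flow_plan = (\<Sum>y\<in>V - A. \<nu> y)"
proof -
  have "real (gdist V E x y) * cut_flow_plan x y = w x y" for x y
  proof (cases "w x y = 0")
    case True then show ?thesis by (simp add: cut_flow_plan_def)
  next
    case False
    then have "x \<noteq> y" "gdist V E x y = 1" using cut_flow_support gdist_adj by auto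
    then show ?thesis by (simp add: cut_flow_plan_def)
  qed
  then have "cost cut_flow_plan = (\<Sum>x\<in>V. \<Sum>y\<in>V. w x y)" by simp
  also have "\<dots> = (\<Sum>y\<in>V. col_sum w y)" unfolding col_sum_def by (rule sum.swap)
  also have "\<dots> = (\<Sum>y\<in>V - A. col_sum w y)"
    using col_sum_cut_flow_inside by (intro sum.mono_neutral_right[OF finite_V]) auto
  finally show ?thesis using cols by simp
qed

lemma wasserstein_eq_mass_outside:
  assumes "\<And>x. \<mu> x \<ge> 0" "(\<Sum>x\<in>V. \<mu> x) = 1" "(\<Sum>x\<in>V. \<nu> x) = 1"
  shows "wasserstein V E \<mu> \<nu> = (\<Sum>y\<in>V - A. \<nu> y)"
proof (rule antisym)
  show "wasserstein V E \<mu> \<nu> \<le> (\<Sum>y\<in>V - A. \<nu> y)"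
    using wasserstein_le_cost[OF transport_plan_cut_flow_plan] unfolding cost_cut_flow_plan .
  have "(\<Sum>y\<in>V - A. \<mu> y) = 0" using \<mu>_supp by simp
  then show "wasserstein V E \<mu> \<nu> \<ge> (\<Sum>y\<in>V - A. \<nu> y)"
    using wasserstein_ge_mass_diff[of \<mu> \<nu> "V - A"] assms \<nu>_nonneg by simp
qed

end

lemma trans_prob_to_colour_class:
  assumes col: "proper_colouring col" and s: "s \<in> V"
  shows "(\<Sum>t\<in>{x\<in>V. col x = c}. P g s t) = (if col s = c then g else 1 - g)"
proof -
  let ?B = "{x\<in>V. col x = c}"
  have "(\<Sum>t\<in>?B. P g s t) = (\<Sum>t\<in>?B. if s = t then g else 0)
      + (\<Sum>t\<in>?B. if E s t then (1 - g) / real (deg V E s) else 0)"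
    using s by (simp add: trans_prob_eq sum.distrib)
  also have "(\<Sum>t\<in>?B. if s = t then g else 0) = (if col s = c then g else 0)"
    using s finite_V by (auto simp: sum.delta)
  also have "(\<Sum>t\<in>?B. if E s t then (1 - g) / real (deg V E s) else 0) = (if col s = c then 0 else 1 - g)"
  proof (cases "col s = c")
    case False
    have "(\<Sum>t\<in>?B. if E s t then (1 - g) / real (deg V E s) else 0)
        = (\<Sum>t\<in>V. if E s t then (1 - g) / real (deg V E s) else 0)"
      by (rule sum.mono_neutral_left[OF finite_V]) (use False col in \<open>auto simp: proper_colouring_def\<close>)
    also have "\<dots> = (1 - g) / real (deg V E s) * (\<Sum>t\<in>V. if E s t then 1 else 0)"
      by (simp add: sum_distrib_left if_distrib cong: if_cong)
    also have "\<dots> = 1 - g" using deg_pos[OF s] by (simp add: deg_eq_sum[symmetric])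
    finally show ?thesis using False by simp
  qed (use col in \<open>auto intro!: sum.neutral simp: proper_colouring_def\<close>)
  finally show ?thesis by simp
qed

text \<open>Each step keeps the colour with probability g, which multiplies the deviation from 1/2
  by 2 g - 1.\<close>

lemma colour_class_mass:
  assumes col: "proper_colouring col" and v: "v \<in> V" and g: "0 \<le> g" "g \<le> 1"
  shows "\<bar>(\<Sum>x\<in>{x\<in>V. col x = c}. law g v k x) - 1 / 2\<bar> = 1 / 2 * \<bar>2 * g - 1\<bar> ^ k"
proof (induction k)
  case 0
  show ?case using v finite_V by (auto simp: sum.delta)
next
  case (Suc k)
  let ?B = "{x\<in>V. col x = c}"
  have "(\<Sum>t\<in>?B. law g v (Suc k) t) = (\<Sum>s\<in>V. law g v k s * (\<Sum>t\<in>?B. P g s t))"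
    by (simp add: sum_distrib_left) (rule sum.swap)
  also have "\<dots> = (\<Sum>s\<in>V. law g v k s * (1 - g) + (2 * g - 1) * (if s \<in> ?B then law g v k s else 0))"
    using trans_prob_to_colour_class[OF col] by (intro sum.cong) (auto simp: algebra_simps)
  also have "\<dots> = (1 - g) + (2 * g - 1) * (\<Sum>s\<in>?B. law g v k s)"
  proof -
    have "(\<Sum>s\<in>V. if s \<in> ?B then law g v k s else 0) = (\<Sum>s\<in>V \<inter> ?B. law g v k s)"
      by (rule sum.inter_restrict[OF finite_V, symmetric])
    also have "V \<inter> ?B = ?B" by auto
    finally show ?thesis using sum_law[OF v]
      by (simp add: sum.distrib sum_distrib_right[symmetric] sum_distrib_left[symmetric])
  qed
  finally have "(\<Sum>t\<in>?B. law g v (Suc k) t) - 1 / 2 = (2 * g - 1) * ((\<Sum>s\<in>?B. law g v k s) - 1 / 2)"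
    by (simp add: algebra_simps)
  then show ?case using Suc.IH by (simp add: abs_mult)
qed

lemma parity_class_mod_2: "parity_class col u k = parity_class col u (k mod 2)"
  unfolding parity_class_def by simp

lemma flow_radius_parity_class:
  assumes col: "proper_colouring col" and u: "u \<in> V"
  obtains \<delta> where "\<delta> > 0" "\<And>k. flow_radius (parity_class col u k) \<delta>"
proof -
  have "\<exists>\<delta>>0. flow_radius (parity_class col u j) \<delta>" for j
    by (rule flow_radius_pos[OF bipartition_side_parity_class[OF col] parity_class_nonempty[OF col u]])
  then obtain \<delta>0 \<delta>1 where "\<delta>0 > 0" "flow_radius (parity_class col u 0) \<delta>0"
    and "\<delta>1 > 0" "flow_radius (parity_class col u 1) \<delta>1" by meson
  moreover have "k mod 2 = 0 \<or> k mod 2 = 1" for k :: nat by auto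
  ultimately show ?thesis
    using that[of "min \<delta>0 \<delta>1"] flow_radius_mono parity_class_mod_2 by (metis min.cobounded1 min.cobounded2
        min_less_iff_conj)
qed

lemma law_0_sum_parity_class:
  assumes col: "proper_colouring col" and u: "u \<in> V"
  shows "(\<Sum>x\<in>parity_class col u k. law 0 u k x) = 1"
proof -
  have "(\<Sum>x\<in>parity_class col u k. law 0 u k x) = (\<Sum>x\<in>V. law 0 u k x)"
    by (rule sum.mono_neutral_left[OF finite_V parity_class_subset])
      (use law_0_outside_parity_class[OF col] in blast)
  then show ?thesis using sum_law[OF u] by simp
qed

lemma cut_marginals_dist_le:
  assumes A: "A \<subseteq> V"
  shows "(\<Sum>x\<in>A. \<bar>\<mu> x - \<nu> x - stat_dist x\<bar>) + (\<Sum>y\<in>V - A. \<bar>\<nu> y - stat_dist y\<bar>)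
    \<le> (\<Sum>t\<in>V. \<bar>\<mu> t - side_stat A t\<bar>) + (\<Sum>t\<in>V. \<bar>\<nu> t - stat_dist t\<bar>)"
proof -
  have "(\<Sum>x\<in>A. \<bar>\<mu> x - \<nu> x - stat_dist x\<bar>)
      \<le> (\<Sum>x\<in>A. \<bar>\<mu> x - side_stat A x\<bar>) + (\<Sum>x\<in>A. \<bar>\<nu> x - stat_dist x\<bar>)"
    unfolding sum.distrib[symmetric] by (intro sum_mono) (simp add: side_stat_def)
  also have "\<dots> \<le> (\<Sum>t\<in>V. \<bar>\<mu> t - side_stat A t\<bar>) + (\<Sum>x\<in>A. \<bar>\<nu> x - stat_dist x\<bar>)"
    by (intro add_right_mono sum_mono2[OF finite_V A]) auto
  finally show ?thesis
    using sum.subset_diff[OF A finite_V, of "\<lambda>x. \<bar>\<nu> x - stat_dist x\<bar>"] by simp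
qed

lemma wasserstein_eventually_mass_outside:
  assumes col: "proper_colouring col" and u: "u \<in> V" and v: "v \<in> V" and \<beta>: "0 < \<beta>" "\<beta> < 1"
  shows "\<exists>N. \<forall>k\<ge>N. wasserstein V E (law 0 u k) (law \<beta> v k)
      = (\<Sum>y\<in>V - parity_class col u k. law \<beta> v k y)"
proof -
  let ?A = "parity_class col u"
  obtain \<delta> where "\<delta> > 0" and \<delta>: "\<And>k. flow_radius (?A k) \<delta>"
    using flow_radius_parity_class[OF col u] by blast
  let ?e = "\<lambda>k. \<Sum>t\<in>V. \<bar>law 0 u k t - side_stat (?A k) t\<bar>"
  let ?f = "\<lambda>k. \<Sum>t\<in>V. \<bar>law \<beta> v k t - stat_dist t\<bar>"
  have "(\<lambda>k. ?e k + ?f k) \<longlonglongrightarrow> 0 + 0"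
    using law_0_tendsto_side_stat[OF col u] law_tendsto_stat_dist[OF v] \<beta> by (intro tendsto_add) auto
  then have "\<forall>\<^sub>F k in sequentially. ?e k + ?f k < \<delta>" using \<open>\<delta> > 0\<close> by (intro order_tendstoD) auto
  then obtain N where N: "\<And>k. k \<ge> N \<Longrightarrow> ?e k + ?f k < \<delta>" by (auto simp: eventually_sequentially)
  have "wasserstein V E (law 0 u k) (law \<beta> v k) = (\<Sum>y\<in>V - ?A k. law \<beta> v k y)" if "k \<ge> N" for k
  proof -
    let ?\<mu> = "law 0 u k" and ?\<nu> = "law \<beta> v k"
    have A: "?A k \<subseteq> V" by (rule parity_class_subset)
    have close: "(\<Sum>x\<in>?A k. \<bar>?\<mu> x - ?\<nu> x - stat_dist x\<bar>) + (\<Sum>y\<in>V - ?A k. \<bar>?\<nu> y - stat_dist y\<bar>)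
        < \<delta>"
      using cut_marginals_dist_le[OF A, of ?\<mu> ?\<nu>] N[OF that] by linarith
    have balance: "(\<Sum>x\<in>?A k. ?\<mu> x - ?\<nu> x) = (\<Sum>y\<in>V - ?A k. ?\<nu> y)"
      using law_0_sum_parity_class[OF col u] sum.subset_diff[OF A finite_V, of ?\<nu>] sum_law[OF v]
      by (simp add: sum_subtractf)
    obtain w where w: "cut_supported (?A k) w" "\<forall>x y. w x y \<ge> 0"
      "\<forall>x\<in>?A k. row_sum w x = ?\<mu> x - ?\<nu> x" "\<forall>y\<in>V - ?A k. col_sum w y = ?\<nu> y"
      using \<delta>[of k, unfolded flow_radius_def, rule_format, OF close balance] by blast
    show ?thesis
    proof (rule wasserstein_eq_mass_outside[OF bipartition_side_parity_class[OF col]])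
      show "?\<mu> x = 0" if "x \<in> V" "x \<notin> ?A k" for x
        using law_0_outside_parity_class[OF col that(2,1)] .
    qed (use w law_nonneg \<beta> sum_law[OF u] sum_law[OF v] in auto)
  qed
  then show ?thesis by blast
qed

lemma wasserstein_law_0_opposite_colours_ge_1:
  assumes col: "proper_colouring col" and u: "u \<in> V" and v: "v \<in> V" and "col u \<noteq> col v"
  shows "wasserstein V E (law 0 u k) (law 0 v k) \<ge> 1"
proof -
  let ?B = "parity_class col v k"
  have "(\<Sum>x\<in>?B. law 0 u k x) = 0"
    using law_0_outside_parity_class[OF col] \<open>col u \<noteq> col v\<close> parity_class_subset
    by (intro sum.neutral) (auto simp: parity_class_def)
  moreover have "wasserstein V E (law 0 u k) (law 0 v k) \<ge> (\<Sum>x\<in>?B. law 0 v k x) - (\<Sum>x\<in>?B. law 0 u k x)"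
    by (rule wasserstein_ge_mass_diff) (use law_nonneg sum_law u v parity_class_subset in auto)
  ultimately show ?thesis using law_0_sum_parity_class[OF col v] by simp
qed

lemma wasserstein_law_tendsto_0:
  assumes "u \<in> V" "v \<in> V" "0 \<le> \<alpha>" "\<alpha> \<le> 1" "0 \<le> \<beta>" "\<beta> \<le> 1"
    and "(\<lambda>k. \<Sum>t\<in>V. \<bar>law \<alpha> u k t - p k t\<bar>) \<longlonglongrightarrow> 0" "(\<lambda>k. \<Sum>t\<in>V. \<bar>law \<beta> v k t - p k t\<bar>) \<longlonglongrightarrow> 0"
  shows "(\<lambda>k. wasserstein V E (law \<alpha> u k) (law \<beta> v k)) \<longlonglongrightarrow> 0"
  using assms law_nonneg sum_law by (intro wasserstein_tendsto_0_if_common_limit) auto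

lemma wasserstein_law_0_not_tendsto_half:
  assumes col: "proper_colouring col" and u: "u \<in> V" and v: "v \<in> V"
  shows "\<not> (\<lambda>k. wasserstein V E (law 0 u k) (law 0 v k)) \<longlonglongrightarrow> 1 / 2"
proof
  assume lim: "(\<lambda>k. wasserstein V E (law 0 u k) (law 0 v k)) \<longlonglongrightarrow> 1 / 2"
  show False
  proof (cases "col u = col v")
    case True
    then have "parity_class col v = parity_class col u" unfolding parity_class_def by auto
    then have "(\<lambda>k. wasserstein V E (law 0 u k) (law 0 v k)) \<longlonglongrightarrow> 0"
      using law_0_tendsto_side_stat[OF col u] law_0_tendsto_side_stat[OF col v] u v
      by (intro wasserstein_law_tendsto_0[where p = "\<lambda>k. side_stat (parity_class col u k)"]) auto
    with lim show False using LIMSEQ_unique by fastforce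
  next
    case False
    then have "1 \<le> (1 / 2 :: real)"
      using wasserstein_law_0_opposite_colours_ge_1[OF col u v] by (intro LIMSEQ_le_const[OF lim]) auto
    then show False by simp
  qed
qed

lemma bipartite_nonlazy_if_limit_half:
  assumes u: "u \<in> V" and v: "v \<in> V" and g: "0 \<le> \<alpha>" "\<alpha> \<le> \<beta>" "\<beta> < 1"
    and lim: "(\<lambda>k. wasserstein V E (law \<alpha> u k) (law \<beta> v k)) \<longlonglongrightarrow> 1 / 2"
  obtains col where "proper_colouring col" "\<alpha> = 0" "\<beta> > 0"
proof -
  have "\<not> (\<alpha> > 0 \<or> \<not> bipartite)"
  proof
    assume "\<alpha> > 0 \<or> \<not> bipartite"
    then have "(\<lambda>k. wasserstein V E (law \<alpha> u k) (law \<beta> v k)) \<longlonglongrightarrow> 0"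
      using law_tendsto_stat_dist[OF u, of \<alpha>] law_tendsto_stat_dist[OF v, of \<beta>] u v g
      by (intro wasserstein_law_tendsto_0[where p = "\<lambda>_. stat_dist"]) auto
    with lim show False using LIMSEQ_unique by fastforce
  qed
  then obtain col where col: "proper_colouring col" and "\<alpha> = 0"
    using g unfolding bipartite_def by force
  moreover have "\<beta> \<noteq> 0" using wasserstein_law_0_not_tendsto_half[OF col u v] lim \<open>\<alpha> = 0\<close> by auto
  ultimately show ?thesis using that g by simp
qed

lemma wasserstein_bipartite_deviation:
  assumes col: "proper_colouring col" and u: "u \<in> V" and v: "v \<in> V" and \<beta>: "0 < \<beta>" "\<beta> < 1"
  shows "\<exists>N. \<forall>k\<ge>N. \<bar>wasserstein V E (law 0 u k) (law \<beta> v k) - 1 / 2\<bar> = 1 / 2 * \<bar>1 - 2 * \<beta>\<bar> ^ k"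
proof -
  obtain N where N: "\<And>k. k \<ge> N \<Longrightarrow> wasserstein V E (law 0 u k) (law \<beta> v k)
      = (\<Sum>y\<in>V - parity_class col u k. law \<beta> v k y)"
    using wasserstein_eventually_mass_outside[OF col u v \<beta>] by blast
  have "\<bar>wasserstein V E (law 0 u k) (law \<beta> v k) - 1 / 2\<bar> = 1 / 2 * \<bar>1 - 2 * \<beta>\<bar> ^ k"
    if "k \<ge> N" for k
  proof -
    have "V - parity_class col u k = {x\<in>V. col x = (col u = odd k)}"
      unfolding parity_class_def by auto
    then show ?thesis
      using N[OF that] colour_class_mass[OF col v, where g = \<beta> and c = "col u = odd k" and k = k] \<beta>
      by (simp add: abs_minus_commute)
  qed
  then show ?thesis by blast
qed

end

theorem theorem5p7:
  fixes V :: "'a set" and E :: "'a \<Rightarrow> 'a \<Rightarrow> bool" and u v :: 'a and \<alpha> \<beta> :: real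
  assumes "guvab V E u v \<alpha> \<beta>"
    and "(\<lambda>k. Wk V E u v \<alpha> \<beta> k) \<longlonglongrightarrow> 1 / 2"
    and "\<beta> < 1"
  shows "\<exists>N. \<forall>k\<ge>N. \<bar>Wk V E u v \<alpha> \<beta> k - 1 / 2\<bar> = 0.5 * \<bar>1 - 2 * \<beta>\<bar> ^ k"
proof -
  have conn: "connected_graph V E" and u: "u \<in> V" and v: "v \<in> V" and g: "0 \<le> \<alpha>" "\<alpha> \<le> \<beta>"
    using assms(1) unfolding guvab_def by auto
  have lim: "(\<lambda>k. wasserstein V E (walk_dist V E \<alpha> u k) (walk_dist V E \<beta> v k)) \<longlonglongrightarrow> 1 / 2"
    using assms(2) unfolding Wk_def .
  interpret connected_simple_graph V E by (rule connected_simple_graph.intro[OF conn])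
  interpret nontrivial_graph V E
    by unfold_locales (rule card_V_ge_2_if_wasserstein_limit[OF u v _ lim], simp)
  obtain col where "proper_colouring col" "\<alpha> = 0" "\<beta> > 0"
    using bipartite_nonlazy_if_limit_half[OF u v g assms(3) lim] .
  then show ?thesis
    using wasserstein_bipartite_deviation[OF _ u v _ assms(3)] unfolding Wk_def by simp
qed

end
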